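(* Let $N\in\mathbb{N}$ and real constants $C_{\alpha_1,\ldots,\alpha_k}$ ($\alpha_1+\cdots+\alpha_k=N$) be given, and let $P(b_2,\ldots,b_k):=\sum_{\alpha_1+\cdots+\alpha_k=N}C_{\alpha_1,\ldots,\alpha_k}b_2^{\alpha_2}b_3^{\alpha_3}\cdots b_k^{\alpha_k}$. Suppose there exist vectors $e_1=1=\sum_{r=1}^mI_r$, $e_j=\sum_{r=1}^na_{jr}I_r$ ($a_{jr}\in\mathbb{C}$, $j=2,\ldots,k$) in $\mathbb{A}_n^m$, linearly independent over $\mathbb{R}$, satisfying $$\sum_{\alpha_1+\cdots+\alpha_k=N}C_{\alpha_1,\ldots,\alpha_k}\,e_2^{\alpha_2}e_3^{\alpha_3}\cdots e_k^{\alpha_k}=0.$$ If $P(b_2,\ldots,b_k)\ne0$ for all real $b_2,\ldots,b_k$, then $f_u(E_k)=\mathbb{C}$ for all $u=1,\ldots,m$, where $E_k$ is the real linear span of $e_1,\ldots,e_k$.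
   Context: Fix integers $1\le m\le n$ and $2\le k\le 2n$. $\mathbb{A}_n^m$ is an $n$-dimensional commutative associative algebra with unit over $\mathbb{C}$ having a basis $\{I_r\}_{r=1}^n$ with the multiplication rules: (1) for $r,s\in\{1,\ldots,m\}$: $I_rI_s=0$ if $r\ne s$ and $I_rI_r=I_r$; (2) for $r,s\in\{m+1,\ldots,n\}$: $I_rI_s=\sum_{p=\max\{r,s\}+1}^n\Upsilon^s_{r,p}I_p$ with $\Upsilon^s_{r,p}\in\mathbb{C}$; (3) for each $s\in\{m+1,\ldots,n\}$ there is a unique $u_s\in\{1,\ldots,m\}$ such that for all $r\in\{1,\ldots,m\}$: $I_rI_s=I_s$ if $r=u_s$ and $I_rI_s=0$ otherwise. The unit is $\sum_{u=1}^mI_u$. For $u=1,\ldots,m$, $f_u:\mathbb{A}_n^m\to\mathbb{C}$ is the linear functional $f_u(\sum_r\lambda_rI_r)=\lambda_u$, and $f_u(E_k):=\{f_u(\zeta):\zeta\in E_k\}$. *)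

theory Defs
  imports Complex_Main
begin

text \<open>Elements of the algebra A_n^m are coefficient vectors x :: nat => complex
  with respect to the basis I_1..I_n; x r is the coefficient of I_r
  (support contained in {1..n}).\<close>

definition alg_elems :: "nat \<Rightarrow> (nat \<Rightarrow> complex) set" where
  "alg_elems n = {x. \<forall>r. r \<notin> {1..n} \<longrightarrow> x r = 0}"

definition basisI :: "nat \<Rightarrow> nat \<Rightarrow> complex" where
  "basisI r = (\<lambda>p. if p = r then 1 else 0)"

text \<open>Product I_r I_s given by the multiplication rules (1)-(3), with
  us s = u_s and Ups s r p = Upsilon^s_{r,p}.\<close>
definition basis_prod ::
  "nat \<Rightarrow> nat \<Rightarrow> (nat \<Rightarrow> nat) \<Rightarrow> (nat \<Rightarrow> nat \<Rightarrow> nat \<Rightarrow> complex)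
   \<Rightarrow> nat \<Rightarrow> nat \<Rightarrow> nat \<Rightarrow> complex" where
  "basis_prod n m us Ups r s =
     (if r \<le> m \<and> s \<le> m then (if r = s then basisI r else (\<lambda>_. 0))
      else if m < r \<and> m < s then (\<lambda>p. if max r s < p \<and> p \<le> n then Ups s r p else 0)
      else if r \<le> m then (if r = us s then basisI s else (\<lambda>_. 0))
      else (if s = us r then basisI r else (\<lambda>_. 0)))"

definition amul ::
  "nat \<Rightarrow> nat \<Rightarrow> (nat \<Rightarrow> nat) \<Rightarrow> (nat \<Rightarrow> nat \<Rightarrow> nat \<Rightarrow> complex)
   \<Rightarrow> (nat \<Rightarrow> complex) \<Rightarrow> (nat \<Rightarrow> complex) \<Rightarrow> nat \<Rightarrow> complex" where
  "amul n m us Ups x y =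
     (\<lambda>p. \<Sum>r\<in>{1..n}. \<Sum>s\<in>{1..n}. x r * y s * basis_prod n m us Ups r s p)"

definition aunit :: "nat \<Rightarrow> nat \<Rightarrow> complex" where
  "aunit m = (\<lambda>p. if 1 \<le> p \<and> p \<le> m then 1 else 0)"

fun apow ::
  "nat \<Rightarrow> nat \<Rightarrow> (nat \<Rightarrow> nat) \<Rightarrow> (nat \<Rightarrow> nat \<Rightarrow> nat \<Rightarrow> complex)
   \<Rightarrow> (nat \<Rightarrow> complex) \<Rightarrow> nat \<Rightarrow> nat \<Rightarrow> complex" where
  "apow n m us Ups x 0 = aunit m"
| "apow n m us Ups x (Suc j) = amul n m us Ups x (apow n m us Ups x j)"

fun amono ::
  "nat \<Rightarrow> nat \<Rightarrow> (nat \<Rightarrow> nat) \<Rightarrow> (nat \<Rightarrow> nat \<Rightarrow> nat \<Rightarrow> complex)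
   \<Rightarrow> (nat \<Rightarrow> nat \<Rightarrow> complex) \<Rightarrow> (nat \<Rightarrow> nat) \<Rightarrow> nat list \<Rightarrow> nat \<Rightarrow> complex" where
  "amono n m us Ups e a [] = aunit m"
| "amono n m us Ups e a (j # js) =
     amul n m us Ups (apow n m us Ups (e j) (a j)) (amono n m us Ups e a js)"

definition multi_idx :: "nat \<Rightarrow> nat \<Rightarrow> (nat \<Rightarrow> nat) set" where
  "multi_idx N k = {a. (\<forall>j. j \<notin> {1..k} \<longrightarrow> a j = 0) \<and> (\<Sum>j=1..k. a j) = N}"

definition f_fun :: "nat \<Rightarrow> (nat \<Rightarrow> complex) \<Rightarrow> complex" where
  "f_fun u x = x u"

definition real_span_E :: "nat \<Rightarrow> (nat \<Rightarrow> nat \<Rightarrow> complex) \<Rightarrow> (nat \<Rightarrow> complex) set" where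
  "real_span_E k e = {(\<lambda>p. \<Sum>j=1..k. complex_of_real (c j) * e j p) | c. True}"

definition real_lin_indep :: "nat \<Rightarrow> (nat \<Rightarrow> nat \<Rightarrow> complex) \<Rightarrow> bool" where
  "real_lin_indep k e \<longleftrightarrow>
     (\<forall>c :: nat \<Rightarrow> real. (\<lambda>p. \<Sum>j=1..k. complex_of_real (c j) * e j p) = (\<lambda>_. 0)
        \<longrightarrow> (\<forall>j\<in>{1..k}. c j = 0))"

end

theory Submission
  imports Defs
begin

text \<open>For u \<le> m the functional f_u reads off the coefficient of the idempotent I_u, and
  I_u occurs in a product of basis elements only as I_u I_u = I_u; hence f_u is a ring
  homomorphism onto \<complex>. Applying it to the relation among the e_j shows that
  P vanishes at (f_u(e_2), ..., f_u(e_k)). Since P has no real zero, some f_u(e_j) is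
  non-real, and together with f_u(e_1) = 1 it spans \<complex> over \<real>.\<close>

lemma basis_prod_at_idempotent:
  assumes "u \<in> {1..m}" "r \<in> {1..n}" "s \<in> {1..n}"
  shows "basis_prod n m us Ups r s u = (if r = u \<and> s = u then 1 else 0)"
  using assms by (auto simp: basis_prod_def basisI_def)

lemma amul_at_idempotent:
  assumes "u \<in> {1..m}" "m \<le> n"
  shows "amul n m us Ups x y u = x u * y u"
proof -
  have "amul n m us Ups x y u =
      (\<Sum>r\<in>{1..n}. \<Sum>s\<in>{1..n}. x r * y s * (if r = u \<and> s = u then 1 else 0))"
    unfolding amul_def using assms by (intro sum.cong refl) (simp add: basis_prod_at_idempotent)
  also have "\<dots> = (\<Sum>r\<in>{1..n}. if r = u then x r * y u else 0)"
    using assms by (intro sum.cong refl) (auto simp: if_distrib cong: if_cong)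
  also have "\<dots> = x u * y u"
    using assms by simp
  finally show ?thesis .
qed

lemma apow_at_idempotent:
  assumes "u \<in> {1..m}" "m \<le> n"
  shows "apow n m us Ups x j u = x u ^ j"
  by (induction j) (use assms in \<open>auto simp: amul_at_idempotent aunit_def\<close>)

lemma amono_at_idempotent:
  assumes "u \<in> {1..m}" "m \<le> n" "distinct js"
  shows "amono n m us Ups e a js u = (\<Prod>j\<in>set js. e j u ^ a j)"
  using assms(3)
  by (induction js) (use assms(1,2) in \<open>auto simp: amul_at_idempotent apow_at_idempotent aunit_def\<close>)

lemma nonreal_coordinate_of_complex_root:
  fixes C :: "('j \<Rightarrow> nat) \<Rightarrow> real" and z :: "'j \<Rightarrow> complex"
  assumes root: "(\<Sum>a\<in>A. of_real (C a) * (\<Prod>j\<in>J. z j ^ a j)) = 0"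
    and no_real_root: "\<And>b :: 'j \<Rightarrow> real. (\<Sum>a\<in>A. C a * (\<Prod>j\<in>J. b j ^ a j)) \<noteq> 0"
  shows "\<exists>j\<in>J. Im (z j) \<noteq> 0"
proof (rule ccontr)
  assume "\<not> (\<exists>j\<in>J. Im (z j) \<noteq> 0)"
  then have real: "\<And>j. j \<in> J \<Longrightarrow> z j = of_real (Re (z j))"
    by (simp add: complex_eq_iff)
  have "of_real (\<Sum>a\<in>A. C a * (\<Prod>j\<in>J. Re (z j) ^ a j))
      = (\<Sum>a\<in>A. of_real (C a) * (\<Prod>j\<in>J. z j ^ a j))"
    unfolding of_real_sum of_real_mult of_real_prod of_real_power
    by (intro sum.cong refl arg_cong2[where f = "(*)"] prod.cong) (use real in auto)
  with root no_real_root show False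
    by (metis of_real_eq_0_iff)
qed

lemma real_combination_of_one_and_nonreal:
  assumes "Im z \<noteq> 0"
  shows "w = of_real (Re w - Im w / Im z * Re z) + of_real (Im w / Im z) * z"
  using assms by (simp add: complex_eq_iff)

lemma f_fun_real_span_E_eq_UNIV:
  assumes e1u: "e 1 u = 1" and j0: "j0 \<in> {2..k}" "Im (e j0 u) \<noteq> 0"
  shows "f_fun u ` real_span_E k e = UNIV"
proof (intro set_eqI iffI)
  fix w :: complex
  define c where "c = (\<lambda>j. if j = 1 then Re w - Im w / Im (e j0 u) * Re (e j0 u)
                           else if j = j0 then Im w / Im (e j0 u) else 0)"
  have "(\<Sum>j=1..k. of_real (c j) * e j u) = (\<Sum>j\<in>{1, j0}. of_real (c j) * e j u)"
    using j0 by (intro sum.mono_neutral_right) (auto simp: c_def)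
  also have "\<dots> = w"
    using j0 e1u real_combination_of_one_and_nonreal[OF j0(2), of w] by (simp add: c_def)
  finally show "w \<in> f_fun u ` real_span_E k e"
    unfolding real_span_E_def f_fun_def image_iff by force
qed simp

theorem theorem4:
  fixes n m k N :: nat
    and us :: "nat \<Rightarrow> nat"
    and Ups :: "nat \<Rightarrow> nat \<Rightarrow> nat \<Rightarrow> complex"
    and C :: "(nat \<Rightarrow> nat) \<Rightarrow> real"
    and e :: "nat \<Rightarrow> nat \<Rightarrow> complex"
  assumes "1 \<le> m" and "m \<le> n" and "2 \<le> k" and "k \<le> 2 * n"
    and us_range: "\<forall>s\<in>{m+1..n}. us s \<in> {1..m}"
    and comm: "\<forall>x\<in>alg_elems n. \<forall>y\<in>alg_elems n. amul n m us Ups x y = amul n m us Ups y x"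
    and assoc: "\<forall>x\<in>alg_elems n. \<forall>y\<in>alg_elems n. \<forall>z\<in>alg_elems n.
          amul n m us Ups (amul n m us Ups x y) z = amul n m us Ups x (amul n m us Ups y z)"
    and e1: "e 1 = aunit m"
    and e_in: "\<forall>j\<in>{2..k}. e j \<in> alg_elems n"
    and indep: "real_lin_indep k e"
    and eq: "(\<lambda>p. \<Sum>a\<in>multi_idx N k. complex_of_real (C a) * amono n m us Ups e a [2..<k+1] p)
             = (\<lambda>_. 0)"
    and P_nz: "\<forall>b :: nat \<Rightarrow> real. (\<Sum>a\<in>multi_idx N k. C a * (\<Prod>j=2..k. b j ^ a j)) \<noteq> 0"
  shows "\<forall>u\<in>{1..m}. f_fun u ` real_span_E k e = UNIV"
proof
  fix u assume u: "u \<in> {1..m}"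
  have "set [2..<k+1] = {2..k}" by auto
  then have "(\<Sum>a\<in>multi_idx N k. of_real (C a) * (\<Prod>j\<in>{2..k}. e j u ^ a j)) = 0"
    using fun_cong[OF eq, of u] amono_at_idempotent[OF u \<open>m \<le> n\<close>, of "[2..<k+1]"] by simp
  then obtain j0 where j0: "j0 \<in> {2..k}" "Im (e j0 u) \<noteq> 0"
    using nonreal_coordinate_of_complex_root[where z = "\<lambda>j. e j u"] P_nz by blast
  moreover have "e 1 u = 1"
    using e1 u by (simp add: aunit_def)
  ultimately show "f_fun u ` real_span_E k e = UNIV"
    using f_fun_real_span_E_eq_UNIV by blast
qed

end
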